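(* Let $n\ge 1$ and consider system (S) below associated with a 3-SAT instance on $n$ variables. If $(x,\gamma,\Delta,y,d,s)$ is feasible for (S), then $$|x_j| \ \ge\ 1-\frac{12}{n^5}-\frac{2^{-2^n}}{n^5}\qquad\text{for all } 1\le j\le 2n.$$
   Context: Let $h(y) := 2y_1^3 + y_2^3 - 6y_1y_2 + 4$ and $R_\gamma := [1.259-\gamma,1.26]\times[1.587,1.59]$. Let $D\subseteq\mathbb{R}\times\mathbb{R}^n$ be the set of $(s,d)$ with $0\le d_1\le\frac12$, $0\le d_k\le d_{k-1}^2$ ($k=2,\dots,n$), $0\le s\le d_n^2$. A 3-SAT instance consists of Boolean variables $w_1,\dots,w_n$ and clauses $C_1,\dots,C_m$, each a disjunction of three literals (a literal is some $w_j$ or its negation $\bar w_j$). To the literal $w_j$ associate the real variable $x_j$ and to $\bar w_j$ the real variable $x_{n+j}$. For clause $C_i$ denote by $x_{i_1},x_{i_2},x_{i_3}$ the variables associated with its three literals. System (S) has variables $x\in\mathbb{R}^{2n}$, $\gamma,\Delta,s\in\mathbb{R}$, $y\in\mathbb{R}^2$, $d\in\mathbb{R}^n$, and constraints: $-1\le x_j\le 1$ for $j\in[2n]$; $x_j+x_{n+j}=0$ for $j\in[n]$; $x_{i_1}+x_{i_2}+x_{i_3}\ge -1-\Delta$ for each clause $C_i$; $\gamma\ge 0$, $0\le\Delta\le 2$, $\Delta+\gamma/2\le 2$; $y\in R_\gamma$; $(s,d)\in D$; and $-n^5\sum_{j=1}^n x_j^2 + h(y) - s\le -n^6$. *)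

theory Defs
  imports Complex_Main
begin

datatype lit = Pos nat | Neg nat

fun lit_index :: "nat \<Rightarrow> lit \<Rightarrow> nat" where
  "lit_index n (Pos j) = j"
| "lit_index n (Neg j) = n + j"

fun lit_var :: "lit \<Rightarrow> nat" where
  "lit_var (Pos j) = j"
| "lit_var (Neg j) = j"

type_synonym clause = "lit \<times> lit \<times> lit"

definition valid_instance :: "nat \<Rightarrow> clause list \<Rightarrow> bool" where
  "valid_instance n cs \<longleftrightarrow>
     (\<forall>(l1, l2, l3) \<in> set cs. \<forall>l \<in> {l1, l2, l3}. lit_var l \<in> {1..n})"

definition h :: "real \<Rightarrow> real \<Rightarrow> real" where
  "h y1 y2 = 2 * y1 ^ 3 + y2 ^ 3 - 6 * y1 * y2 + 4"

definition R_gamma :: "real \<Rightarrow> (real \<times> real) set" where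
  "R_gamma \<gamma> = {1.259 - \<gamma> .. 1.26} \<times> {1.587 .. 1.59}"

definition D_set :: "nat \<Rightarrow> (real \<times> (nat \<Rightarrow> real)) set" where
  "D_set n = {(s, d). 0 \<le> d 1 \<and> d 1 \<le> 1/2
      \<and> (\<forall>k \<in> {2..n}. 0 \<le> d k \<and> d k \<le> (d (k - 1))^2)
      \<and> 0 \<le> s \<and> s \<le> (d n)^2}"

text \<open>Feasibility for system (S); x is indexed by 1..2n, d by 1..n.\<close>
definition feasible_S ::
  "nat \<Rightarrow> clause list \<Rightarrow> (nat \<Rightarrow> real) \<Rightarrow> real \<Rightarrow> real \<Rightarrow> real \<times> real
     \<Rightarrow> (nat \<Rightarrow> real) \<Rightarrow> real \<Rightarrow> bool" where
  "feasible_S n cs x \<gamma> \<Delta> y d s \<longleftrightarrow>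
     (\<forall>j \<in> {1..2*n}. -1 \<le> x j \<and> x j \<le> 1)
   \<and> (\<forall>j \<in> {1..n}. x j + x (n + j) = 0)
   \<and> (\<forall>(l1, l2, l3) \<in> set cs.
        x (lit_index n l1) + x (lit_index n l2) + x (lit_index n l3) \<ge> -1 - \<Delta>)
   \<and> \<gamma> \<ge> 0 \<and> 0 \<le> \<Delta> \<and> \<Delta> \<le> 2 \<and> \<Delta> + \<gamma> / 2 \<le> 2
   \<and> y \<in> R_gamma \<gamma>
   \<and> (s, d) \<in> D_set n
   \<and> (- ((real n)^5 * (\<Sum>j = 1..n. (x j)^2)) + h (fst y) (snd y) - s \<le> - ((real n)^6))"

end

theory Submission
  imports Defs
begin

text \<open>Every feasible point has \<open>\<gamma> \<le> 4\<close>, so \<open>y\<close> lies in the box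
  \<open>[-2.741, 1.26] \<times> [1.587, 1.59]\<close>, on which \<open>h \<ge> -12\<close>; the chain defining \<open>D\<close>
  forces \<open>d\<^sub>k \<le> 2^(-2^(k-1))\<close> and hence \<open>s \<le> 2^(-2^n)\<close>. The last constraint of (S)
  then gives \<open>n\<^sup>5 \<Sum>x\<^sub>j\<^sup>2 \<ge> n\<^sup>6 - 12 - 2^(-2^n)\<close>. Since every \<open>x\<^sub>j\<^sup>2 \<le> 1\<close>, each single
  square satisfies \<open>x\<^sub>j\<^sup>2 \<ge> 1 - (12 + 2^(-2^n))/n\<^sup>5\<close>, and \<open>|x\<^sub>j| \<ge> x\<^sub>j\<^sup>2\<close>.
  The negated literals \<open>x\<^sub>n\<^sub>+\<^sub>j = -x\<^sub>j\<close> inherit the bound.\<close>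

lemma h_ge_neg12:
  fixes a b :: real
  assumes "-2.741 \<le> a" "a \<le> 1.26" "1.587 \<le> b" "b \<le> 1.59"
  shows "h a b \<ge> -12"
proof -
  have "(1.587::real)^3 \<le> b^3" using assms by (intro power_mono) auto
  then have b3: "b^3 \<ge> 39/10" by (simp add: power3_eq_cube)
  have h_eq: "h a b = 2*a^3 + b^3 - 6*(a*b) + 4" by (simp add: h_def)
  show ?thesis
  proof (cases "a \<ge> 0")
    case True
    have "a*b \<le> 1.26 * 1.59" using assms True by (intro mult_mono) auto
    then have "a*b \<le> 3" by simp
    moreover have "a^3 \<ge> 0" using True by simp
    ultimately show ?thesis using b3 h_eq by linarith
  next
    case False
    define c where "c = -a"
    have c: "0 \<le> c" "c \<le> 2741/1000" using False assms c_def by auto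
    have "c*c \<le> 2.741*2.741" using c by (intro mult_mono) auto
    then have "c*c \<le> 752/100" by simp
    then have "c*c*c \<le> 752/100 * c" using c by (intro mult_right_mono) auto
    moreover have "a^3 = - (c*c*c)" by (simp add: c_def power3_eq_cube)
    moreover have "c*b \<ge> c * (1587/1000)" using c assms by (intro mult_left_mono) auto
    moreover have "a*b = - (c*b)" by (simp add: c_def)
    ultimately show ?thesis using b3 c h_eq by linarith
  qed
qed

lemma D_set_component_le:
  assumes "(s, d) \<in> D_set n" "1 \<le> k" "k \<le> n"
  shows "0 \<le> d k \<and> d k \<le> (1/2::real) ^ 2 ^ (k - 1)"
  using assms(2,3)
proof (induction k rule: dec_induct)
  case base
  then show ?case using assms(1) by (simp add: D_set_def)
next
  case (step m)
  have "Suc m \<in> {2..n}" using step by auto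
  then have "0 \<le> d (Suc m) \<and> d (Suc m) \<le> (d m)^2"
    using assms(1) unfolding D_set_def by (auto dest!: bspec[where x = "Suc m"])
  moreover have "(d m)^2 \<le> ((1/2::real) ^ 2 ^ (m - 1))^2"
    using step by (intro power_mono) auto
  moreover have "((1/2::real) ^ 2 ^ (m - 1))^2 = (1/2) ^ 2 ^ (Suc m - 1)"
    using step.hyps(1) by (cases m) (auto simp: power_mult[symmetric] mult.commute)
  ultimately show ?case by auto
qed

lemma half_power_two_power: "(1/2::real) ^ 2 ^ n = 2 powr (- (2 ^ n))"
  by (simp add: powr_minus power_one_over inverse_eq_divide flip: powr_realpow)

lemma D_set_s_le:
  assumes "(s, d) \<in> D_set n" "1 \<le> n"
  shows "s \<le> 2 powr (- (2 ^ n))"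
proof -
  have dn: "0 \<le> d n" "d n \<le> (1/2::real) ^ 2 ^ (n - 1)"
    using D_set_component_le[OF assms(1) assms(2) order_refl] by auto
  have "s \<le> (d n)^2" using assms by (simp add: D_set_def)
  also have "\<dots> \<le> ((1/2::real) ^ 2 ^ (n - 1))^2" using dn by (intro power_mono)
  also have "\<dots> = (1/2) ^ 2 ^ n"
    using assms(2) by (cases n) (auto simp: power_mult[symmetric] mult.commute)
  finally show ?thesis by (simp add: half_power_two_power)
qed

lemma sum_squares_le_card_minus_one:
  fixes x :: "'a \<Rightarrow> real"
  assumes "finite A" "\<And>i. i \<in> A \<Longrightarrow> \<bar>x i\<bar> \<le> 1" "j \<in> A"
  shows "(\<Sum>i\<in>A. (x i)^2) \<le> real (card A) - 1 + (x j)^2"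
proof -
  have "(\<Sum>i\<in>A. (x i)^2) = (x j)^2 + (\<Sum>i \<in> A - {j}. (x i)^2)"
    using assms by (simp add: sum.remove)
  also have "(\<Sum>i \<in> A - {j}. (x i)^2) \<le> (\<Sum>i \<in> A - {j}. 1)"
    using assms(2) by (intro sum_mono) (simp add: abs_square_le_1)
  also have "(\<Sum>i \<in> A - {j}. (1::real)) = real (card A) - 1"
    using assms card_gt_0_iff[of A] by (auto simp: card_Diff_singleton of_nat_diff)
  finally show ?thesis by simp
qed

lemma square_le_abs:
  fixes t :: real
  assumes "\<bar>t\<bar> \<le> 1"
  shows "t^2 \<le> \<bar>t\<bar>"
proof -
  have "\<bar>t\<bar> * \<bar>t\<bar> \<le> \<bar>t\<bar> * 1" using assms by (intro mult_left_mono) auto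
  then show ?thesis by (simp add: power2_eq_square abs_mult[symmetric])
qed

lemma feasible_S_sum_squares_ge:
  assumes "n \<ge> 1" "feasible_S n cs x \<gamma> \<Delta> y d s"
  shows "(real n)^6 - 12 - 2 powr (- (2 ^ n)) \<le> (real n)^5 * (\<Sum>j = 1..n. (x j)^2)"
proof -
  have \<gamma>: "0 \<le> \<gamma>" "\<gamma> \<le> 4" and y: "y \<in> R_gamma \<gamma>" and sd: "(s, d) \<in> D_set n"
    and last: "- ((real n)^5 * (\<Sum>j = 1..n. (x j)^2)) + h (fst y) (snd y) - s \<le> - ((real n)^6)"
    using assms(2) unfolding feasible_S_def by auto
  have "h (fst y) (snd y) \<ge> -12"
    using \<gamma> y by (intro h_ge_neg12) (auto simp: R_gamma_def mem_Times_iff)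
  with last D_set_s_le[OF sd assms(1)] show ?thesis by linarith
qed

lemma feasible_S_abs_ge:
  assumes "n \<ge> 1" "feasible_S n cs x \<gamma> \<Delta> y d s" "j \<in> {1..n}"
  shows "\<bar>x j\<bar> \<ge> 1 - 12 / (real n)^5 - (2 powr (- (2 ^ n))) / (real n)^5"
proof -
  define e :: real where "e = 2 powr (- (2 ^ n))"
  have n5: "(real n)^5 > 0" using assms(1) by simp
  have x1: "\<bar>x i\<bar> \<le> 1" if "i \<in> {1..n}" for i
    using assms(2) that unfolding feasible_S_def by (auto simp: abs_le_iff)
  have "(real n)^6 - 12 - e \<le> (real n)^5 * (\<Sum>i = 1..n. (x i)^2)"
    using feasible_S_sum_squares_ge[OF assms(1,2)] e_def by simp
  also have "\<dots> \<le> (real n)^5 * (real n - 1 + (x j)^2)"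
    using sum_squares_le_card_minus_one[of "{1..n}" x j] x1 assms(3) n5
    by (intro mult_left_mono) auto
  finally have "(real n)^5 - 12 - e \<le> (real n)^5 * (x j)^2"
    by (simp add: algebra_simps eval_nat_numeral)
  then have "((real n)^5 - 12 - e) / (real n)^5 \<le> (x j)^2"
    using n5 by (simp add: pos_divide_le_eq mult.commute)
  then have "1 - 12 / (real n)^5 - e / (real n)^5 \<le> (x j)^2"
    using n5 by (simp add: diff_divide_distrib)
  with square_le_abs[OF x1[OF assms(3)]] show ?thesis by (simp add: e_def)
qed

theorem mainTheorem3:
  fixes n :: nat and cs :: "clause list" and x d :: "nat \<Rightarrow> real"
    and \<gamma> \<Delta> s :: real and y :: "real \<times> real"
  assumes "n \<ge> 1"
    and "valid_instance n cs"
    and "feasible_S n cs x \<gamma> \<Delta> y d s"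
  shows "\<forall>j \<in> {1..2*n}.
           \<bar>x j\<bar> \<ge> 1 - 12 / (real n)^5 - (2 powr (- (2 ^ n))) / (real n)^5"
proof
  fix j assume j: "j \<in> {1..2*n}"
  show "\<bar>x j\<bar> \<ge> 1 - 12 / (real n)^5 - (2 powr (- (2 ^ n))) / (real n)^5"
  proof (cases "j \<le> n")
    case True
    with j show ?thesis using feasible_S_abs_ge[OF assms(1,3)] by auto
  next
    case False
    then obtain k where k: "k \<in> {1..n}" "j = n + k"
      using j by (intro that[of "j - n"]) auto
    then have "x j = - x k" using assms(3) unfolding feasible_S_def by force
    with feasible_S_abs_ge[OF assms(1,3) k(1)] show ?thesis by simp
  qed
qed

end
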